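(* Let $A$ be a meet-complemented lattice in which $\Box x$ and $\Diamond x$ exist for every $x\in A$. Then for any $a\in A$ the following are equivalent: (i) $\Diamond\Box a\le\Box a$; (ii) $\Box a\le\Box\Box a$; (iii) $\Box a\vee\neg\Box a=1$; (iv) $\Box\Box a=\Box a$.
   Context: A meet-complemented lattice is a lattice $(L,\le)$ (not necessarily distributive) such that for every $a\in L$ the element $\neg a=\max\{b\in L: a\wedge b\le c\ \text{for all } c\in L\}$ exists; it is bounded with bottom $0$ and top $1$. For $a\in L$, $\Box a=\max\{b\in L: a\vee\neg b=1\}$ and $\Diamond a=\min\{b\in L: \neg a\vee b=1\}$. *)

theory Defs
  imports Main
begin

definition is_max :: "'a::order set \<Rightarrow> 'a \<Rightarrow> bool" where
  "is_max S m \<longleftrightarrow> m \<in> S \<and> (\<forall>x\<in>S. x \<le> m)"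

definition is_min :: "'a::order set \<Rightarrow> 'a \<Rightarrow> bool" where
  "is_min S m \<longleftrightarrow> m \<in> S \<and> (\<forall>x\<in>S. m \<le> x)"

definition mc_neg_set :: "'a::bounded_lattice \<Rightarrow> 'a set" where
  "mc_neg_set a = {b. \<forall>c. inf a b \<le> c}"

definition meet_complemented :: "'a::bounded_lattice itself \<Rightarrow> bool" where
  "meet_complemented _ \<longleftrightarrow> (\<forall>a::'a. \<exists>m. is_max (mc_neg_set a) m)"

definition mc_neg :: "'a::bounded_lattice \<Rightarrow> 'a" where
  "mc_neg a = (THE m. is_max (mc_neg_set a) m)"

definition mc_box_set :: "'a::bounded_lattice \<Rightarrow> 'a set" where
  "mc_box_set a = {b. sup a (mc_neg b) = top}"

definition mc_box :: "'a::bounded_lattice \<Rightarrow> 'a" where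
  "mc_box a = (THE m. is_max (mc_box_set a) m)"

definition mc_dia_set :: "'a::bounded_lattice \<Rightarrow> 'a set" where
  "mc_dia_set a = {b. sup (mc_neg a) b = top}"

definition mc_dia :: "'a::bounded_lattice \<Rightarrow> 'a" where
  "mc_dia a = (THE m. is_min (mc_dia_set a) m)"

end

theory Submission
  imports Defs
begin

text \<open>Everything follows from the adjunction-like characterisations
  \<open>b \<le> \<box>a \<longleftrightarrow> a \<squnion> \<not>b = 1\<close> and \<open>\<diamond>a \<le> b \<longleftrightarrow> \<not>a \<squnion> b = 1\<close>:
  instantiating them at \<open>\<box>a\<close> turns (i) and (ii) directly into (iii).
  For (iv) one needs in addition \<open>\<box>\<box>a \<le> \<box>a\<close>, which holds in general because
  \<open>\<box>b \<le> \<not>\<not>b\<close> gives \<open>\<not>\<box>a \<le> \<not>\<box>\<box>a\<close>.\<close>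

lemma is_max_The: "is_max S m \<Longrightarrow> is_max S (THE m. is_max S m)"
  by (rule theI[of _ m]) (auto simp: is_max_def intro: antisym)

lemma is_min_The: "is_min S m \<Longrightarrow> is_min S (THE m. is_min S m)"
  by (rule theI[of _ m]) (auto simp: is_min_def intro: antisym)

lemma le_mc_neg_iff:
  fixes a b :: "'a::bounded_lattice"
  assumes "meet_complemented TYPE('a)"
  shows "b \<le> mc_neg a \<longleftrightarrow> inf a b = bot"
proof -
  obtain m where "is_max (mc_neg_set a) m"
    using assms unfolding meet_complemented_def by blast
  then have max: "is_max (mc_neg_set a) (mc_neg a)"
    unfolding mc_neg_def by (rule is_max_The)
  then have "\<forall>c. inf a (mc_neg a) \<le> c"
    unfolding is_max_def mc_neg_set_def by simp
  then have "inf a (mc_neg a) = bot"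
    using bot_unique by blast
  show ?thesis
  proof
    assume "b \<le> mc_neg a"
    then have "inf a b \<le> inf a (mc_neg a)"
      by (simp add: inf.coboundedI2)
    with \<open>inf a (mc_neg a) = bot\<close> show "inf a b = bot"
      by (simp add: bot_unique)
  next
    assume "inf a b = bot"
    then have "\<forall>c. inf a b \<le> c"
      by simp
    then show "b \<le> mc_neg a"
      using max unfolding is_max_def mc_neg_set_def by blast
  qed
qed

lemma mc_neg_antimono:
  fixes a b :: "'a::bounded_lattice"
  assumes "meet_complemented TYPE('a)" and "a \<le> b"
  shows "mc_neg b \<le> mc_neg a"
proof -
  have "inf b (mc_neg b) = bot"
    using le_mc_neg_iff[OF assms(1)] by blast
  with assms(2) have "inf a (mc_neg b) = bot"
    by (metis bot_unique inf_mono order_refl)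
  then show ?thesis
    using le_mc_neg_iff[OF assms(1)] by blast
qed

lemma le_mc_neg_neg:
  fixes a :: "'a::bounded_lattice"
  assumes "meet_complemented TYPE('a)"
  shows "a \<le> mc_neg (mc_neg a)"
proof -
  have "inf a (mc_neg a) = bot"
    using le_mc_neg_iff[OF assms] by blast
  then show ?thesis
    using le_mc_neg_iff[OF assms] by (simp add: inf_commute)
qed

lemma inf_mc_neg_eq_bot_if_sup_eq_top:
  fixes x y :: "'a::bounded_lattice"
  assumes "meet_complemented TYPE('a)" and "sup x y = top"
  shows "inf (mc_neg x) (mc_neg y) = bot"
proof -
  let ?z = "inf (mc_neg x) (mc_neg y)"
  have "inf x ?z = bot" and "inf y ?z = bot"
    using le_mc_neg_iff[OF assms(1), of ?z x] le_mc_neg_iff[OF assms(1), of ?z y] by simp_all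
  then have "x \<le> mc_neg ?z" and "y \<le> mc_neg ?z"
    using le_mc_neg_iff[OF assms(1)] by (simp_all add: inf_commute)
  then have "top \<le> mc_neg ?z"
    using assms(2) by (metis sup_least)
  then have "inf ?z top = bot"
    using le_mc_neg_iff[OF assms(1)] by (metis top_unique order_refl)
  then show ?thesis
    by simp
qed

lemma le_mc_box_iff:
  fixes a b :: "'a::bounded_lattice"
  assumes "meet_complemented TYPE('a)" and "\<forall>x::'a. \<exists>m. is_max (mc_box_set x) m"
  shows "b \<le> mc_box a \<longleftrightarrow> sup a (mc_neg b) = top"
proof -
  obtain m where "is_max (mc_box_set a) m"
    using assms(2) by blast
  then have max: "is_max (mc_box_set a) (mc_box a)"
    unfolding mc_box_def by (rule is_max_The)
  show ?thesis
  proof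
    assume "b \<le> mc_box a"
    then have "mc_neg (mc_box a) \<le> mc_neg b"
      by (rule mc_neg_antimono[OF assms(1)])
    moreover have "sup a (mc_neg (mc_box a)) = top"
      using max unfolding is_max_def mc_box_set_def by simp
    ultimately show "sup a (mc_neg b) = top"
      by (metis sup_mono order_refl top_unique)
  next
    assume "sup a (mc_neg b) = top"
    then show "b \<le> mc_box a"
      using max unfolding is_max_def mc_box_set_def by simp
  qed
qed

lemma mc_dia_le_iff:
  fixes a b :: "'a::bounded_lattice"
  assumes "\<forall>x::'a. \<exists>m. is_min (mc_dia_set x) m"
  shows "mc_dia a \<le> b \<longleftrightarrow> sup (mc_neg a) b = top"
proof -
  obtain m where "is_min (mc_dia_set a) m"
    using assms by blast
  then have min: "is_min (mc_dia_set a) (mc_dia a)"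
    unfolding mc_dia_def by (rule is_min_The)
  show ?thesis
  proof
    assume "mc_dia a \<le> b"
    moreover have "sup (mc_neg a) (mc_dia a) = top"
      using min unfolding is_min_def mc_dia_set_def by simp
    ultimately show "sup (mc_neg a) b = top"
      by (metis sup_mono order_refl top_unique)
  next
    assume "sup (mc_neg a) b = top"
    then show "mc_dia a \<le> b"
      using min unfolding is_min_def mc_dia_set_def by simp
  qed
qed

lemma mc_box_le_neg_neg:
  fixes b :: "'a::bounded_lattice"
  assumes "meet_complemented TYPE('a)" and "\<forall>x::'a. \<exists>m. is_max (mc_box_set x) m"
  shows "mc_box b \<le> mc_neg (mc_neg b)"
proof -
  have "sup b (mc_neg (mc_box b)) = top"
    using le_mc_box_iff[OF assms] by blast
  then have "inf (mc_neg b) (mc_neg (mc_neg (mc_box b))) = bot"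
    by (rule inf_mc_neg_eq_bot_if_sup_eq_top[OF assms(1)])
  then have "inf (mc_neg b) (mc_box b) = bot"
    using le_mc_neg_neg[OF assms(1), of "mc_box b"]
    by (metis bot_unique inf_mono order_refl)
  then show ?thesis
    using le_mc_neg_iff[OF assms(1)] by blast
qed

lemma mc_box_box_le:
  fixes a :: "'a::bounded_lattice"
  assumes "meet_complemented TYPE('a)" and "\<forall>x::'a. \<exists>m. is_max (mc_box_set x) m"
  shows "mc_box (mc_box a) \<le> mc_box a"
proof -
  let ?p = "mc_box a"
  have "mc_neg ?p \<le> mc_neg (mc_neg (mc_neg ?p))"
    by (rule le_mc_neg_neg[OF assms(1)])
  also have "\<dots> \<le> mc_neg (mc_box ?p)"
    by (rule mc_neg_antimono[OF assms(1) mc_box_le_neg_neg[OF assms]])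
  finally have "mc_neg ?p \<le> mc_neg (mc_box ?p)" .
  moreover have "sup a (mc_neg ?p) = top"
    using le_mc_box_iff[OF assms] by blast
  ultimately have "sup a (mc_neg (mc_box ?p)) = top"
    by (metis sup_mono order_refl top_unique)
  then show ?thesis
    using le_mc_box_iff[OF assms] by blast
qed

theorem proposition17:
  fixes a :: "'a::bounded_lattice"
  assumes "meet_complemented TYPE('a)"
    and "\<forall>x::'a. \<exists>m. is_max (mc_box_set x) m"
    and "\<forall>x::'a. \<exists>m. is_min (mc_dia_set x) m"
  shows "(mc_dia (mc_box a) \<le> mc_box a \<longleftrightarrow> mc_box a \<le> mc_box (mc_box a))
       \<and> (mc_box a \<le> mc_box (mc_box a) \<longleftrightarrow> sup (mc_box a) (mc_neg (mc_box a)) = top)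
       \<and> (sup (mc_box a) (mc_neg (mc_box a)) = top \<longleftrightarrow> mc_box (mc_box a) = mc_box a)"
proof -
  let ?p = "mc_box a"
  have "mc_dia ?p \<le> ?p \<longleftrightarrow> sup ?p (mc_neg ?p) = top"
    using mc_dia_le_iff[OF assms(3)] by (simp add: sup_commute)
  moreover have "?p \<le> mc_box ?p \<longleftrightarrow> sup ?p (mc_neg ?p) = top"
    using le_mc_box_iff[OF assms(1,2)] by blast
  moreover have "mc_box ?p \<le> ?p"
    by (rule mc_box_box_le[OF assms(1,2)])
  ultimately show ?thesis
    by (auto intro: antisym)
qed

end
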